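(* Let $f_1,f_2$ be strongly hyperbolic functions, $a_0>0$, $b_0,c_0\in\mathbb{R}$, $C=\overline{f_{a_0,b_0,c_0}}$ and $p=(\infty,c_0)$. Let $q\in\mathcal{P}$ with $q\notin C$ and $q$ not parallel to $p$. Then there exist $a_1>0$, $b_1,c_1\in\mathbb{R}$ such that $D=\overline{f_{a_1,b_1,c_1}}$ contains $p$ and $q$ and $C\cap D=\{p\}$.
   Context: Identify $\mathbb{S}^1$ with $\mathbb{R}\cup\{\infty\}$, $\mathcal{P}=\mathbb{S}^1\times\mathbb{S}^1$, $\mathbb{R}^+=(0,\infty)$. Two points of $\mathcal{P}$ are parallel if they have the same first coordinate or the same second coordinate. A function $f:\mathbb{R}^+\to\mathbb{R}^+$ is strongly hyperbolic if: (1) $\lim_{x\to0+}f(x)=+\infty$, $\lim_{x\to+\infty}f(x)=0$; (2) $f$ strictly convex; (3) $\lim_{x\to+\infty}f(x+b)/f(x)=1$ for each $b\in\mathbb{R}$; (4) $f$ differentiable; (5) $\ln|f'|$ strictly convex. For $a>0$, $b,c\in\mathbb{R}$: $f_{a,b,c}(x)=af_1(x+b)+c$ for $x>-b$, $f_{a,b,c}(x)=-af_2(-x-b)+c$ for $x<-b$; $\overline{f_{a,b,c}}=\{(x,f_{a,b,c}(x)):x\ne-b\}\cup\{(-b,\infty),(\infty,c)\}$. *)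

theory Defs
  imports "HOL-Analysis.Analysis"
begin

text \<open>The circle S^1 identified with R together with a point at infinity.\<close>
datatype ext = Fin real | Infty

type_synonym point = "ext \<times> ext"

definition parallel :: "point \<Rightarrow> point \<Rightarrow> bool" where
  "parallel p q \<longleftrightarrow> fst p = fst q \<or> snd p = snd q"

definition strictly_convex_on :: "real set \<Rightarrow> (real \<Rightarrow> real) \<Rightarrow> bool" where
  "strictly_convex_on S f \<longleftrightarrow>
     (\<forall>x\<in>S. \<forall>y\<in>S. \<forall>t. x \<noteq> y \<and> 0 < t \<and> t < 1 \<longrightarrow>
        f ((1 - t) * x + t * y) < (1 - t) * f x + t * f y)"

text \<open>Strongly hyperbolic functions R+ -> R+ (only values on (0,oo) matter).\<close>
definition strongly_hyperbolic :: "(real \<Rightarrow> real) \<Rightarrow> bool" where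
  "strongly_hyperbolic f \<longleftrightarrow>
     (\<forall>x>0. f x > 0) \<and>
     filterlim f at_top (at_right 0) \<and>
     (f \<longlongrightarrow> 0) at_top \<and>
     strictly_convex_on {0<..} f \<and>
     (\<forall>b::real. ((\<lambda>x. f (x + b) / f x) \<longlongrightarrow> 1) at_top) \<and>
     (\<forall>x>0. f differentiable at x) \<and>
     strictly_convex_on {0<..} (\<lambda>x. ln \<bar>deriv f x\<bar>)"

definition fabc :: "(real \<Rightarrow> real) \<Rightarrow> (real \<Rightarrow> real) \<Rightarrow> real \<Rightarrow> real \<Rightarrow> real \<Rightarrow> real \<Rightarrow> real" where
  "fabc f1 f2 a b c x =
     (if x > - b then a * f1 (x + b) + c else - a * f2 (- x - b) + c)"

definition fabc_closure :: "(real \<Rightarrow> real) \<Rightarrow> (real \<Rightarrow> real) \<Rightarrow> real \<Rightarrow> real \<Rightarrow> real \<Rightarrow> point set" where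
  "fabc_closure f1 f2 a b c =
     {(Fin x, Fin (fabc f1 f2 a b c x)) | x. x \<noteq> - b} \<union> {(Fin (- b), Infty), (Infty, Fin c)}"

end

theory Submission
  imports Defs
begin

text \<open>
  Translating the curve in the x-direction gives the required curve D. Write g for the curve
  with b = 0, so that the curve with shift b is x \<mapsto> g (x + b). Since f1 and f2 are positive,
  strictly decreasing and map (0,\<infinity>) onto itself, g is a bijection from R - {0} onto
  R - {c}, decreasing on each branch, with g > c exactly on the positive branch. Surjectivity
  yields a shift b1 whose curve passes through q (necessarily b1 \<noteq> b0, as q \<notin> C), and
  injectivity shows that two curves with different shifts meet only at their common point
  at infinity (\<infinity>, c).
\<close>

lemma strictly_convex_on_increasing_beyond:
  assumes "strictly_convex_on S f" "s \<in> S" "u \<in> S" "s < t" "t < u" "f s \<le> f t"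
  shows "f t < f u"
proof -
  define w where "w = (t - s) / (u - s)"
  have w: "0 < w" "w < 1" using assms by (auto simp: w_def field_simps)
  have "w * (u - s) = t - s" using assms by (simp add: w_def)
  then have t: "t = (1 - w) * s + w * u" by (simp add: algebra_simps)
  have "f t < (1 - w) * f s + w * f u"
    using assms w unfolding t strictly_convex_on_def by auto
  also have "\<dots> \<le> (1 - w) * f t + w * f u"
    using assms(6) w by (simp add: mult_left_mono)
  finally show ?thesis using w by (simp add: algebra_simps)
qed

lemma strongly_hyperbolic_pos:
  assumes "strongly_hyperbolic f" "x > 0"
  shows "f x > 0"
  using assms unfolding strongly_hyperbolic_def by auto

lemma strongly_hyperbolic_strict_antimono:
  assumes "strongly_hyperbolic f" "0 < s" "s < t"
  shows "f t < f s"
proof (rule ccontr)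
  assume "\<not> f t < f s"
  then have grows: "f t < f u" if "t < u" for u
    using assms that strictly_convex_on_increasing_beyond[of "{0<..}" f s u t]
    unfolding strongly_hyperbolic_def by auto
  have "(f \<longlongrightarrow> 0) at_top" "f t > 0"
    using assms strongly_hyperbolic_pos[of f t] unfolding strongly_hyperbolic_def by auto
  then obtain N where "\<And>u. u \<ge> N \<Longrightarrow> f u < f t"
    using order_tendstoD(2) eventually_at_top_linorder by metis
  then have "f (max N (t + 1)) < f t" by simp
  moreover have "f t < f (max N (t + 1))" by (rule grows) simp
  ultimately show False by simp
qed

lemma strongly_hyperbolic_continuous_on: "strongly_hyperbolic f \<Longrightarrow> continuous_on {0<..} f"
  unfolding strongly_hyperbolic_def
  by (meson continuous_at_imp_continuous_on differentiable_imp_continuous_within greaterThan_iff)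

lemma strongly_hyperbolic_surj:
  assumes "strongly_hyperbolic f" "v > 0"
  shows "\<exists>t>0. f t = v"
proof -
  have "filterlim f at_top (at_right 0)" "(f \<longlongrightarrow> 0) at_top"
    using assms(1) unfolding strongly_hyperbolic_def by auto
  then have "\<forall>\<^sub>F x in at_right 0. v < f x" "\<forall>\<^sub>F x in at_top. f x < v"
    using assms(2) by (auto simp: filterlim_at_top_dense order_tendsto_iff)
  then have "\<forall>\<^sub>F x in at_right 0. v < f x \<and> 0 < x"
    by (simp add: eventually_conj eventually_at_right_less)
  then obtain s where s: "0 < s" "v < f s"
    using eventually_happens' trivial_limit_at_right_real by blast
  have "\<forall>\<^sub>F x in at_top. f x < v \<and> s < x"
    using \<open>\<forall>\<^sub>F x in at_top. f x < v\<close> by (simp add: eventually_conj eventually_gt_at_top)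
  then obtain u where u: "s < u" "f u < v"
    using eventually_happens' trivial_limit_at_top_linorder by blast
  have "continuous_on {s..u} f"
    by (rule continuous_on_subset[OF strongly_hyperbolic_continuous_on[OF assms(1)]]) (use s in auto)
  then obtain t where "s \<le> t" "f t = v"
    using IVT2'[of f u v s] s u by auto
  with s show ?thesis by (auto intro!: exI[of _ t])
qed

lemma fabc_shift: "fabc f1 f2 a b c x = fabc f1 f2 a 0 c (x + b)"
  by (simp add: fabc_def)

lemma fabc_gt_on_right_branch:
  assumes "strongly_hyperbolic f1" "a > 0" "x > 0"
  shows "fabc f1 f2 a 0 c x > c"
  using assms strongly_hyperbolic_pos[of f1 x] by (simp add: fabc_def)

lemma fabc_lt_on_left_branch:
  assumes "strongly_hyperbolic f2" "a > 0" "x < 0"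
  shows "fabc f1 f2 a 0 c x < c"
  using assms strongly_hyperbolic_pos[of f2 "- x"] by (simp add: fabc_def)

lemma fabc_inj_on:
  assumes "strongly_hyperbolic f1" "strongly_hyperbolic f2" "a > 0"
  shows "inj_on (fabc f1 f2 a 0 c) (- {0})"
proof -
  have less: "fabc f1 f2 a 0 c y < fabc f1 f2 a 0 c x"
    if "x < y" "0 < x \<or> y < 0" for x y
  proof (cases "0 < x")
    case True
    with that assms show ?thesis
      using strongly_hyperbolic_strict_antimono[of f1 x y] by (simp add: fabc_def)
  next
    case False
    with that assms show ?thesis
      using strongly_hyperbolic_strict_antimono[of f2 "- y" "- x"] by (simp add: fabc_def)
  qed
  have sign: "0 < x \<longleftrightarrow> 0 < y"
    if "x \<noteq> 0" "y \<noteq> 0" "fabc f1 f2 a 0 c x = fabc f1 f2 a 0 c y" for x y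
    using that fabc_gt_on_right_branch[OF assms(1,3)] fabc_lt_on_left_branch[OF assms(2,3)]
    by (metis linorder_neqE_linordered_idom order_less_asym)
  show ?thesis
  proof (rule inj_onI)
    fix x y assume "x \<in> - {0}" "y \<in> - {0}" and eq: "fabc f1 f2 a 0 c x = fabc f1 f2 a 0 c y"
    then have "0 < x \<and> 0 < y \<or> x < 0 \<and> y < 0"
      using sign by (auto simp: linorder_neq_iff)
    then show "x = y"
      using eq less[of x y] less[of y x] by (cases x y rule: linorder_cases) auto
  qed
qed

lemma fabc_image:
  assumes "strongly_hyperbolic f1" "strongly_hyperbolic f2" "a > 0"
  shows "fabc f1 f2 a 0 c ` (- {0}) = - {c}"
proof (intro equalityI subsetI)
  fix y assume "y \<in> fabc f1 f2 a 0 c ` (- {0})"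
  then obtain x where "x \<noteq> 0" "y = fabc f1 f2 a 0 c x" by auto
  then show "y \<in> - {c}"
    using fabc_gt_on_right_branch[OF assms(1,3)] fabc_lt_on_left_branch[OF assms(2,3)]
    by (metis ComplI linorder_neqE_linordered_idom order_less_irrefl singletonD)
next
  fix y assume y: "y \<in> - {c}"
  show "y \<in> fabc f1 f2 a 0 c ` (- {0})"
  proof (cases "c < y")
    case True
    then obtain t where "t > 0" "f1 t = (y - c) / a"
      using strongly_hyperbolic_surj[OF assms(1), of "(y - c) / a"] assms(3) by auto
    with assms(3) have "fabc f1 f2 a 0 c t = y" "t \<in> - {0}" by (auto simp: fabc_def)
    then show ?thesis by (metis imageI)
  next
    case False
    with y have "c > y" by auto
    then obtain t where "t > 0" "f2 t = (c - y) / a"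
      using strongly_hyperbolic_surj[OF assms(2), of "(c - y) / a"] assms(3) by auto
    with assms(3) have "fabc f1 f2 a 0 c (- t) = y" "- t \<in> - {0}" by (auto simp: fabc_def)
    then show ?thesis by (metis imageI)
  qed
qed

lemma fabc_closure_Int_shift:
  assumes "strongly_hyperbolic f1" "strongly_hyperbolic f2" "a > 0" "b0 \<noteq> b1"
  shows "fabc_closure f1 f2 a b0 c \<inter> fabc_closure f1 f2 a b1 c = {(Infty, Fin c)}"
proof -
  have "fabc f1 f2 a b0 c x \<noteq> fabc f1 f2 a b1 c x" if "x \<noteq> - b0" "x \<noteq> - b1" for x
  proof
    assume "fabc f1 f2 a b0 c x = fabc f1 f2 a b1 c x"
    then have "x + b0 = x + b1"
      using that inj_onD[OF fabc_inj_on[OF assms(1-3), of c], of "x + b0" "x + b1"]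
      by (simp add: fabc_shift[of _ _ _ b0] fabc_shift[of _ _ _ b1] add_eq_0_iff)
    with assms(4) show False by simp
  qed
  with assms(4) show ?thesis unfolding fabc_closure_def by auto
qed

lemma fabc_closure_through_point:
  assumes "strongly_hyperbolic f1" "strongly_hyperbolic f2" "a > 0"
    and "\<not> parallel q (Infty, Fin c)"
  obtains b where "q \<in> fabc_closure f1 f2 a b c"
proof -
  obtain qx qy where q: "q = (qx, qy)" by fastforce
  with assms(4) have "qx \<noteq> Infty" "qy \<noteq> Fin c" by (auto simp: parallel_def)
  then obtain x where x: "qx = Fin x" by (cases qx) auto
  show thesis
  proof (cases qy)
    case Infty
    then show thesis using q x that[of "- x"] by (simp add: fabc_closure_def)
  next
    case (Fin y)
    with \<open>qy \<noteq> Fin c\<close> have "y \<in> fabc f1 f2 a 0 c ` (- {0})"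
      using fabc_image[OF assms(1-3)] by auto
    then obtain t where "t \<noteq> 0" "fabc f1 f2 a 0 c t = y" by auto
    then have "fabc f1 f2 a (t - x) c x = y" "x \<noteq> - (t - x)"
      by (simp_all add: fabc_shift[of _ _ _ "t - x"])
    then have "q \<in> fabc_closure f1 f2 a (t - x) c"
      using q x Fin unfolding fabc_closure_def by auto
    then show thesis by (rule that)
  qed
qed

theorem lemma4p11:
  fixes f1 f2 :: "real \<Rightarrow> real" and a0 b0 c0 :: real and q :: point
  assumes "strongly_hyperbolic f1" and "strongly_hyperbolic f2"
    and "a0 > 0"
    and "q \<notin> fabc_closure f1 f2 a0 b0 c0"
    and "\<not> parallel q (Infty, Fin c0)"
  shows "\<exists>a1 b1 c1. a1 > 0 \<and>
           (Infty, Fin c0) \<in> fabc_closure f1 f2 a1 b1 c1 \<and>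
           q \<in> fabc_closure f1 f2 a1 b1 c1 \<and>
           fabc_closure f1 f2 a0 b0 c0 \<inter> fabc_closure f1 f2 a1 b1 c1 = {(Infty, Fin c0)}"
proof -
  obtain b1 where q: "q \<in> fabc_closure f1 f2 a0 b1 c0"
    using fabc_closure_through_point[OF assms(1-3,5)] .
  with assms(4) have "b0 \<noteq> b1" by auto
  then have "fabc_closure f1 f2 a0 b0 c0 \<inter> fabc_closure f1 f2 a0 b1 c0 = {(Infty, Fin c0)}"
    using fabc_closure_Int_shift[OF assms(1-3)] by blast
  moreover have "(Infty, Fin c0) \<in> fabc_closure f1 f2 a0 b1 c0"
    by (simp add: fabc_closure_def)
  ultimately show ?thesis using assms(3) q by blast
qed

end
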